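(* In the fixed-flow two-parallel-path setting, for every integer $t\ge L$, $$\frac{b_{d_1d}(t-m+1)}{b_{d_2d}(t-n+1)}\;\ge\;\min\big(r_{d_1d}(t-m+1),\,r_{d_1d}(t-n+1)\big)\;\ge\; r_{\min}(t).$$
   Context: Model (linear decision rule). Directed graph $G=(V,E)$, source $s$, destination $d$, discrete time; pheromone $p_{uv}(t)$, forward flows $f_v(t)$, backward flows $b_v(t)$; leakages $l_v\in[0,1]$; decay $\delta\in(0,1)$; exogenous inputs $f_s(t),b_d(t)$. Edge flows: $f_{uv}(t)=f_u(t)p_{uv}(t)/\sum_{z:(u,z)\in E}p_{uz}(t)$, $b_{uv}(t)=b_v(t)p_{uv}(t)/\sum_{z:(z,v)\in E}p_{zv}(t)$ (at a vertex with a single outgoing, resp. incoming, edge the whole flow goes along it). Updates: $f_v(t+1)=(1-l_v)\sum_{z:(z,v)\in E}f_{zv}(t)$ for $v\neq s$, $b_u(t+1)=(1-l_u)\sum_{z:(u,z)\in E}b_{uz}(t)$ for $u\ne d$, $p_{uv}(t+1)=\delta(p_{uv}(t)+f_{uv}(t)+b_{uv}(t))$. Two parallel paths: $G$ is the union of directed paths $P_1,P_2$ from $s$ to $d$ sharing only $s,d$; $s_1,s_2$ are the successors of $s$ and $d_1,d_2$ the predecessors of $d$ on $P_1,P_2$; $m=\mathrm{len}(P_1)$, $n=\mathrm{len}(P_2)$ (numbers of edges), $L=\max(m,n)$. Potential: $r_{ss_1}(t)=p_{ss_1}(t)/p_{ss_2}(t)$, $r_{d_1d}(t)=p_{d_1d}(t)/p_{d_2d}(t)$,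 and for $t\ge L$, $r_{\min}(t)=\min\{r_{ss_1}(t-i),\,r_{d_1d}(t-i):0\le i\le L-1\}$. Fixed-flow setting: $f_s(t)=\bar f>0$ and $b_d(t)=\bar b>0$ for all $t$, and all initial pheromone levels $p_{uv}(0)$ are positive. *)

theory Defs
  imports Main "HOL-Library.Extended_Real"
begin

definition fedge :: "('v \<times> 'v) set \<Rightarrow> ('v \<Rightarrow> real) \<Rightarrow> ('v \<times> 'v \<Rightarrow> real) \<Rightarrow> 'v \<Rightarrow> 'v \<Rightarrow> real" where
  "fedge E f p u v = f u * p (u, v) / (\<Sum>z\<in>{z. (u, z) \<in> E}. p (u, z))"

definition bedge :: "('v \<times> 'v) set \<Rightarrow> ('v \<Rightarrow> real) \<Rightarrow> ('v \<times> 'v \<Rightarrow> real) \<Rightarrow> 'v \<Rightarrow> 'v \<Rightarrow> real" where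
  "bedge E b p u v = b v * p (u, v) / (\<Sum>z\<in>{z. (z, v) \<in> E}. p (z, v))"

(* State (forward flows, backward flows, pheromone) at time t in the fixed-flow
   setting: f_s(t) = fbar, b_d(t) = bbar for all t. *)
primrec ant_state ::
  "('v \<times> 'v) set \<Rightarrow> 'v \<Rightarrow> 'v \<Rightarrow> ('v \<Rightarrow> real) \<Rightarrow> real \<Rightarrow> real \<Rightarrow> real \<Rightarrow>
   ('v \<Rightarrow> real) \<Rightarrow> ('v \<Rightarrow> real) \<Rightarrow> ('v \<times> 'v \<Rightarrow> real) \<Rightarrow> nat \<Rightarrow>
   ('v \<Rightarrow> real) \<times> ('v \<Rightarrow> real) \<times> ('v \<times> 'v \<Rightarrow> real)" where
  "ant_state E s d l \<delta> fbar bbar f0 b0 p0 0 = (f0, b0, p0)"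
| "ant_state E s d l \<delta> fbar bbar f0 b0 p0 (Suc t) =
     (case ant_state E s d l \<delta> fbar bbar f0 b0 p0 t of (f, b, p) \<Rightarrow>
       ((\<lambda>v. if v = s then fbar
              else (1 - l v) * (\<Sum>z\<in>{z. (z, v) \<in> E}. fedge E f p z v)),
        (\<lambda>u. if u = d then bbar
              else (1 - l u) * (\<Sum>z\<in>{z. (u, z) \<in> E}. bedge E b p u z)),
        (\<lambda>(u, v). \<delta> * (p (u, v) + fedge E f p u v + bedge E b p u v))))"

definition Fw where "Fw E s d l \<delta> fbar bbar f0 b0 p0 t = fst (ant_state E s d l \<delta> fbar bbar f0 b0 p0 t)"
definition Bw where "Bw E s d l \<delta> fbar bbar f0 b0 p0 t = fst (snd (ant_state E s d l \<delta> fbar bbar f0 b0 p0 t))"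
definition Ph where "Ph E s d l \<delta> fbar bbar f0 b0 p0 t = snd (snd (ant_state E s d l \<delta> fbar bbar f0 b0 p0 t))"

definition Bedge where
  "Bedge E s d l \<delta> fbar bbar f0 b0 p0 t u v =
     bedge E (Bw E s d l \<delta> fbar bbar f0 b0 p0 t) (Ph E s d l \<delta> fbar bbar f0 b0 p0 t) u v"

definition is_dpath :: "('v \<times> 'v) set \<Rightarrow> 'v list \<Rightarrow> bool" where
  "is_dpath E P \<longleftrightarrow> length P \<ge> 2 \<and> distinct P \<and> (\<forall>i. Suc i < length P \<longrightarrow> (P ! i, P ! Suc i) \<in> E)"

definition path_edges :: "'v list \<Rightarrow> ('v \<times> 'v) set" where
  "path_edges P = {(P ! i, P ! Suc i) | i. Suc i < length P}"

definition plen :: "'v list \<Rightarrow> nat" where "plen P = length P - 1"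

definition two_parallel_paths :: "('v \<times> 'v) set \<Rightarrow> 'v \<Rightarrow> 'v \<Rightarrow> 'v list \<Rightarrow> 'v list \<Rightarrow> bool" where
  "two_parallel_paths E s d P1 P2 \<longleftrightarrow>
     is_dpath E P1 \<and> is_dpath E P2 \<and>
     hd P1 = s \<and> last P1 = d \<and> hd P2 = s \<and> last P2 = d \<and>
     set P1 \<inter> set P2 = {s, d} \<and>
     E = path_edges P1 \<union> path_edges P2"

definition succ_s :: "'v list \<Rightarrow> 'v" where "succ_s P = P ! 1"
definition pred_d :: "'v list \<Rightarrow> 'v" where "pred_d P = P ! (length P - 2)"

definition r_min :: "(nat \<Rightarrow> real) \<Rightarrow> (nat \<Rightarrow> real) \<Rightarrow> nat \<Rightarrow> nat \<Rightarrow> real" where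
  "r_min rs rd L t = Min ((\<lambda>i. rs (t - i)) ` {..<L} \<union> (\<lambda>i. rd (t - i)) ` {..<L})"

end

theory Submission
  imports Defs
begin

text \<open>Since the backward flow into \<open>d\<close> is the constant \<open>bbar\<close>, the backward flow on an edge
  \<open>(d\<^sub>i, d)\<close> at time \<open>\<tau>\<close> is \<open>bbar\<close> times its pheromone share among the two edges into \<open>d\<close>.
  Writing \<open>x\<close> and \<open>y\<close> for the values of \<open>r\<^sub>d\<^sub>1\<^sub>d\<close> at the two times, the quotient of the
  backward flows is therefore \<open>x (1 + y) / (1 + x)\<close>, which lies between \<open>x\<close> and \<open>y\<close>.
  Both times \<open>t - m + 1\<close> and \<open>t - n + 1\<close> are of the form \<open>t - i\<close> with \<open>i < L\<close>, whence the bound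
  by \<open>r\<^sub>m\<^sub>i\<^sub>n(t)\<close>.\<close>

lemma fedge_nonneg:
  "\<lbrakk>0 \<le> f u; \<forall>e\<in>E. 0 < p e; (u, v) \<in> E\<rbrakk> \<Longrightarrow> 0 \<le> fedge E f p u v"
  unfolding fedge_def by (auto intro!: divide_nonneg_nonneg sum_nonneg simp: less_imp_le)

lemma bedge_nonneg:
  "\<lbrakk>0 \<le> b v; \<forall>e\<in>E. 0 < p e; (u, v) \<in> E\<rbrakk> \<Longrightarrow> 0 \<le> bedge E b p u v"
  unfolding bedge_def by (auto intro!: divide_nonneg_nonneg sum_nonneg simp: less_imp_le)

lemma ant_state_invariant:
  assumes l: "\<forall>v. 0 \<le> l v \<and> l v \<le> 1" and "0 < \<delta>" "0 < fbar" "0 < bbar"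
    and "\<forall>v. 0 \<le> f0 v" "\<forall>v. 0 \<le> b0 v" "\<forall>e\<in>E. 0 < p0 e" "b0 d = bbar"
    and state: "ant_state E s d l \<delta> fbar bbar f0 b0 p0 t = (f, b, p)"
  shows "(\<forall>v. 0 \<le> f v) \<and> (\<forall>v. 0 \<le> b v) \<and> (\<forall>e\<in>E. 0 < p e) \<and> b d = bbar"
  using state
proof (induction t arbitrary: f b p)
  case 0
  then show ?case using assms by simp
next
  case (Suc t)
  obtain f' b' p' where prev: "ant_state E s d l \<delta> fbar bbar f0 b0 p0 t = (f', b', p')"
    by (metis prod_cases3)
  with Suc.IH have f': "\<forall>v. 0 \<le> f' v" and b': "\<forall>v. 0 \<le> b' v" and p': "\<forall>e\<in>E. 0 < p' e"
    by auto
  from Suc.prems prev have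
    f: "f = (\<lambda>v. if v = s then fbar else (1 - l v) * (\<Sum>z\<in>{z. (z, v) \<in> E}. fedge E f' p' z v))" and
    b: "b = (\<lambda>u. if u = d then bbar else (1 - l u) * (\<Sum>z\<in>{z. (u, z) \<in> E}. bedge E b' p' u z))" and
    p: "p = (\<lambda>(u, v). \<delta> * (p' (u, v) + fedge E f' p' u v + bedge E b' p' u v))"
    by auto
  have "\<forall>v. 0 \<le> f v"
    unfolding f using \<open>0 < fbar\<close> l f' p' by (auto intro!: mult_nonneg_nonneg sum_nonneg fedge_nonneg)
  moreover have "\<forall>v. 0 \<le> b v"
    unfolding b using \<open>0 < bbar\<close> l b' p' by (auto intro!: mult_nonneg_nonneg sum_nonneg bedge_nonneg)
  moreover have "\<forall>e\<in>E. 0 < p e"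
  proof
    fix e assume "e \<in> E"
    with p' have "0 < p' e" by blast
    moreover have "0 \<le> fedge E f' p' (fst e) (snd e)" "0 \<le> bedge E b' p' (fst e) (snd e)"
      using f' b' p' \<open>e \<in> E\<close> by (simp_all add: fedge_nonneg bedge_nonneg)
    ultimately show "0 < p e"
      unfolding p using \<open>0 < \<delta>\<close> by (simp add: case_prod_beta)
  qed
  ultimately show ?case by (simp add: b)
qed

lemma in_edge_last_iff_pred_d:
  assumes "is_dpath E P" "last P = d"
  shows "(z, d) \<in> path_edges P \<longleftrightarrow> z = pred_d P"
proof -
  have len: "length P \<ge> 2" and dist: "distinct P"
    using assms(1) unfolding is_dpath_def by auto
  have last_nth: "P ! (length P - 1) = d"
    using assms(2) len last_conv_nth[of P] by fastforce
  have "(z, d) \<in> path_edges P \<longleftrightarrow> (\<exists>i. z = P ! i \<and> Suc i = length P - 1)"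
    unfolding path_edges_def
    using nth_eq_iff_index_eq[OF dist] last_nth len by auto
  also have "\<dots> \<longleftrightarrow> z = pred_d P"
    unfolding pred_d_def using len Suc_diff_le by fastforce
  finally show ?thesis .
qed

lemma two_parallel_paths_in_edges_dest:
  assumes "two_parallel_paths E s d P1 P2"
  shows "{z. (z, d) \<in> E} = {pred_d P1, pred_d P2}"
  using assms in_edge_last_iff_pred_d[of E P1 d] in_edge_last_iff_pred_d[of E P2 d]
  unfolding two_parallel_paths_def by auto

lemma ratio_of_shares_ge_min:
  fixes a1 b1 a2 b2 c :: real
  assumes "0 < a1" "0 < b1" "0 < a2" "0 < b2" "0 < c"
  shows "min (a1 / b1) (a2 / b2) \<le> (c * a1 / (a1 + b1)) / (c * b2 / (a2 + b2))"
proof -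
  define x y where "x = a1 / b1" and "y = a2 / b2"
  have "0 < x" "0 < y" using assms by (simp_all add: x_def y_def)
  have quotient: "(c * a1 / (a1 + b1)) / (c * b2 / (a2 + b2)) = x * (1 + y) / (1 + x)"
    using assms unfolding x_def y_def
    by (simp add: divide_simps add_pos_pos) (simp add: algebra_simps)
  have "min x y * (1 + x) \<le> x * (1 + y)"
    using \<open>0 < x\<close> \<open>0 < y\<close> by (cases "x \<le> y") (simp_all add: algebra_simps mult_left_mono)
  then show ?thesis
    unfolding quotient x_def[symmetric] y_def[symmetric] using \<open>0 < x\<close>
    by (simp add: pos_le_divide_eq)
qed

lemma r_min_le_shifted:
  assumes "0 < k" "k \<le> L" "L \<le> t"
  shows "r_min rs rd L t \<le> rd (t - k + 1)"
proof -
  have "t - k + 1 = t - (k - 1)" using assms by simp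
  then have "rd (t - k + 1) \<in> (\<lambda>i. rd (t - i)) ` {..<L}"
    using assms by (intro image_eqI[of _ _ "k - 1"]) auto
  then show ?thesis unfolding r_min_def by (intro Min_le) auto
qed

lemma plen_pos: "is_dpath E P \<Longrightarrow> 0 < plen P"
  unfolding is_dpath_def plen_def by auto

lemma Bedge_ratio_ge_min:
  assumes paths: "two_parallel_paths E s d P1 P2"
    and "\<forall>v. 0 \<le> l v \<and> l v \<le> 1" "0 < \<delta>" "0 < fbar" "0 < bbar"
    and "\<forall>v. 0 \<le> f0 v" "\<forall>v. 0 \<le> b0 v" "\<forall>e\<in>E. 0 < p0 e" "b0 d = bbar"
  defines "p \<equiv> Ph E s d l \<delta> fbar bbar f0 b0 p0" and "d1 \<equiv> pred_d P1" and "d2 \<equiv> pred_d P2"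
  shows "min (p \<tau>\<^sub>1 (d1, d) / p \<tau>\<^sub>1 (d2, d)) (p \<tau>\<^sub>2 (d1, d) / p \<tau>\<^sub>2 (d2, d))
    \<le> Bedge E s d l \<delta> fbar bbar f0 b0 p0 \<tau>\<^sub>1 d1 d / Bedge E s d l \<delta> fbar bbar f0 b0 p0 \<tau>\<^sub>2 d2 d"
proof -
  have inv: "Bw E s d l \<delta> fbar bbar f0 b0 p0 \<tau> d = bbar \<and> (\<forall>e\<in>E. 0 < p \<tau> e)" for \<tau>
  proof -
    obtain f b p' where "ant_state E s d l \<delta> fbar bbar f0 b0 p0 \<tau> = (f, b, p')"
      by (metis prod_cases3)
    then show ?thesis
      using ant_state_invariant[OF assms(2-9)] unfolding Bw_def Ph_def p_def by simp
  qed
  have into_d: "{z. (z, d) \<in> E} = {d1, d2}"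
    unfolding d1_def d2_def using two_parallel_paths_in_edges_dest[OF paths] .
  then have pos: "0 < p \<tau> (d1, d)" "0 < p \<tau> (d2, d)" for \<tau>
    using inv by auto
  have Bedge: "Bedge E s d l \<delta> fbar bbar f0 b0 p0 \<tau> u d
      = bbar * p \<tau> (u, d) / (\<Sum>z\<in>{d1, d2}. p \<tau> (z, d))" for \<tau> u
    unfolding Bedge_def bedge_def into_d using inv unfolding p_def by simp
  show ?thesis
  proof (cases "d1 = d2")
    case True \<comment> \<open>both paths are the single edge \<open>(s, d)\<close>\<close>
    then show ?thesis unfolding Bedge using pos \<open>0 < bbar\<close> by simp
  next
    case False
    then show ?thesis unfolding Bedge
      using ratio_of_shares_ge_min[OF pos(1)[of \<tau>\<^sub>1] pos(2)[of \<tau>\<^sub>1] pos(1)[of \<tau>\<^sub>2] pos(2)[of \<tau>\<^sub>2]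
          \<open>0 < bbar\<close>]
      by simp
  qed
qed

theorem mainTheorem6:
  fixes E :: "('v \<times> 'v) set" and s d :: 'v and P1 P2 :: "'v list"
    and l :: "'v \<Rightarrow> real" and \<delta> fbar bbar :: real
    and f0 b0 :: "'v \<Rightarrow> real" and p0 :: "'v \<times> 'v \<Rightarrow> real" and t :: nat
  assumes "finite E"
    and "two_parallel_paths E s d P1 P2"
    and "\<forall>v. 0 \<le> l v \<and> l v \<le> 1"
    and "0 < \<delta>" and "\<delta> < 1"
    and "0 < fbar" and "0 < bbar"
    and "f0 s = fbar" and "b0 d = bbar"
    and "\<forall>v. 0 \<le> f0 v" and "\<forall>v. 0 \<le> b0 v"
    and "\<forall>e\<in>E. 0 < p0 e"
    and "t \<ge> max (plen P1) (plen P2)"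
  shows
   "let m = plen P1; n = plen P2; L = max m n;
        s1 = succ_s P1; s2 = succ_s P2; d1 = pred_d P1; d2 = pred_d P2;
        p = Ph E s d l \<delta> fbar bbar f0 b0 p0;
        bb = Bedge E s d l \<delta> fbar bbar f0 b0 p0;
        rs = (\<lambda>\<tau>. p \<tau> (s, s1) / p \<tau> (s, s2));
        rd = (\<lambda>\<tau>. p \<tau> (d1, d) / p \<tau> (d2, d))
    in bb (t - m + 1) d1 d / bb (t - n + 1) d2 d \<ge> min (rd (t - m + 1)) (rd (t - n + 1))
       \<and> min (rd (t - m + 1)) (rd (t - n + 1)) \<ge> r_min rs rd L t"
proof -
  have "0 < plen P1" "0 < plen P2"
    using assms(2) plen_pos unfolding two_parallel_paths_def by blast+
  then show ?thesis
    unfolding Let_def using assms(13)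
    by (intro conjI min.boundedI Bedge_ratio_ge_min[OF assms(2,3,4,6,7,10,11,12,9)]
        r_min_le_shifted) auto
qed

end
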